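(* For every finite simple graph $G$ on $n$ vertices with at least one edge, $$\min_{\lambda_n^{-1}\le x\le 0}W(x)\le n\Big(1-\frac{\delta}{\mu_1}\Big),$$ where $W(x)$ is the (unweighted) walk-generating function of $G$, $\delta$ the minimum degree, $\mu_1$ the largest eigenvalue of the Laplacian $L=D-A$, and $\lambda_n$ the smallest eigenvalue of the adjacency matrix $A$.
   Context: $A$ is the 0/1 adjacency matrix, $D$ the diagonal degree matrix, $\boldsymbol 1$ the all-ones vector. $W(x)=\langle\boldsymbol 1,(I-xA)^{-1}\boldsymbol 1\rangle=\sum_{\lambda\in\sigma(A)}\frac{\langle\boldsymbol 1,P_\lambda\boldsymbol 1\rangle}{1-\lambda x}$, where $P_\lambda$ is the orthogonal projection onto the $\lambda$-eigenspace of $A$, terms with $\langle\boldsymbol 1,P_\lambda\boldsymbol 1\rangle=0$ are omitted, and the value at a pole is $+\infty$. *)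

theory Defs
  imports "HOL-Analysis.Analysis"
begin

text \<open>Finite simple graphs on the vertex type 'n (n = CARD('n) vertices),
  given by a symmetric irreflexive edge relation.\<close>
definition simple_graph :: "('n::finite \<Rightarrow> 'n \<Rightarrow> bool) \<Rightarrow> bool" where
  "simple_graph E \<longleftrightarrow> (\<forall>i j. E i j \<longrightarrow> E j i) \<and> (\<forall>i. \<not> E i i)"

definition adj_matrix :: "('n::finite \<Rightarrow> 'n \<Rightarrow> bool) \<Rightarrow> real^'n^'n" where
  "adj_matrix E = (\<chi> i j. if E i j then 1 else 0)"

definition degree :: "('n::finite \<Rightarrow> 'n \<Rightarrow> bool) \<Rightarrow> 'n \<Rightarrow> nat" where
  "degree E i = card {j. E i j}"

definition degree_matrix :: "('n::finite \<Rightarrow> 'n \<Rightarrow> bool) \<Rightarrow> real^'n^'n" where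
  "degree_matrix E = (\<chi> i j. if i = j then real (degree E i) else 0)"

definition min_degree :: "('n::finite \<Rightarrow> 'n \<Rightarrow> bool) \<Rightarrow> nat" where
  "min_degree E = Min (range (degree E))"

definition laplacian :: "('n::finite \<Rightarrow> 'n \<Rightarrow> bool) \<Rightarrow> real^'n^'n" where
  "laplacian E = degree_matrix E - adj_matrix E"

definition spectrum :: "real^'n^'n \<Rightarrow> real set" where
  "spectrum M = {l. \<exists>v. v \<noteq> 0 \<and> M *v v = l *\<^sub>R v}"

definition eigenspace :: "real^'n^'n \<Rightarrow> real \<Rightarrow> (real^'n) set" where
  "eigenspace M l = {v. M *v v = l *\<^sub>R v}"

definition orth_proj :: "(real^'n) set \<Rightarrow> real^'n \<Rightarrow> real^'n" where
  "orth_proj S v = (THE p. p \<in> S \<and> (\<forall>w\<in>S. (v - p) \<bullet> w = 0))"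

definition ones :: "real^'n" where
  "ones = (\<chi> i. 1)"

definition spec_weight :: "real^'n^'n \<Rightarrow> real \<Rightarrow> real" where
  "spec_weight M l = ones \<bullet> orth_proj (eigenspace M l) ones"

definition walk_gen :: "('n::finite \<Rightarrow> 'n \<Rightarrow> bool) \<Rightarrow> real \<Rightarrow> ereal" where
  "walk_gen E x =
     (let A = adj_matrix E;
          S = {l \<in> spectrum A. spec_weight A l \<noteq> 0}
      in if (\<exists>l\<in>S. 1 - l * x = 0) then PInfty
         else ereal (\<Sum>l\<in>S. spec_weight A l / (1 - l * x)))"

end

theory Submission
  imports Defs
begin

text \<open>On its admissible range, \<open>W(x) = \<langle>\<one>, (I - x A)\<inverse> \<one>\<rangle>\<close> is the maximum of
  \<open>\<langle>\<one>, v\<rangle>\<^sup>2 / \<langle>v, (I - x A) v\<rangle>\<close>, so a uniform bound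
  \<open>\<langle>\<one>, v\<rangle>\<^sup>2 \<le> c \<langle>v, (I - x A) v\<rangle>\<close> gives \<open>W(x) \<le> c\<close>; tested on eigenvectors, the same
  bound gives \<open>1 - \<lambda> x \<ge> 0\<close> for every eigenvalue \<open>\<lambda>\<close>, which for \<open>\<lambda> = \<lambda>\<^sub>n < 0\<close> means
  \<open>x \<ge> 1 / \<lambda>\<^sub>n\<close>. Since \<open>A = D - L\<close> with \<open>D \<ge> \<delta>\<close>, and \<open>L \<le> \<mu>\<^sub>1\<close> on \<open>\<one>\<^sup>\<bottom>\<close> because
  \<open>L \<one> = 0\<close>, one has \<open>(\<mu>\<^sub>1 - \<delta>) \<langle>v, v\<rangle> + \<langle>v, A v\<rangle> \<ge> \<mu>\<^sub>1 \<langle>\<one>, v\<rangle>\<^sup>2 / n\<close>, which is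
  such a bound for \<open>x = -1 / (\<mu>\<^sub>1 - \<delta>)\<close> and \<open>c = n (1 - \<delta> / \<mu>\<^sub>1)\<close>. An edge \<open>uw\<close> and
  the test vector \<open>e\<^sub>u - e\<^sub>w\<close> give \<open>\<mu>\<^sub>1 \<ge> \<delta> + 1\<close> and \<open>\<lambda>\<^sub>n \<le> -1\<close>.\<close>

lemma quadratic_nonneg_imp_linear_coeff_eq_0:
  fixes a c :: real
  assumes "\<And>s. 0 \<le> 2 * s * a + s\<^sup>2 * c"
  shows "a = 0"
proof (rule ccontr)
  assume "a \<noteq> 0"
  define k where "k = \<bar>c\<bar> + 1"
  have "k > 0" "c - 2 * k < 0" unfolding k_def by auto
  have "k\<^sup>2 * (2 * (- a / k) * a + (- a / k)\<^sup>2 * c) = a\<^sup>2 * (c - 2 * k)"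
    using \<open>k > 0\<close> by (simp add: field_simps power2_eq_square)
  also have "\<dots> < 0" using \<open>a \<noteq> 0\<close> \<open>c - 2 * k < 0\<close> by (simp add: mult_pos_neg)
  finally show False
    using assms[of "- a / k"] by (simp add: zero_le_mult_iff[of "k\<^sup>2"] not_le[symmetric])
qed

lemma inner_matrix_vector_symmetric:
  fixes M :: "real^'n^'n"
  assumes "transpose M = M"
  shows "(M *v u) \<bullet> v = u \<bullet> (M *v v)"
  by (metis assms dot_lmul_matrix vector_transpose_matrix)

lemma eigenvectors_orthogonal_symmetric:
  fixes M :: "real^'n^'n"
  assumes "transpose M = M" "M *v u = a *\<^sub>R u" "M *v v = b *\<^sub>R v" "a \<noteq> b"
  shows "u \<bullet> v = 0"
proof -
  have "a * (u \<bullet> v) = b * (u \<bullet> v)"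
    using inner_matrix_vector_symmetric[OF assms(1), of u v] assms(2,3) by simp
  then show ?thesis using assms(4) by simp
qed

lemma finite_spectrum_symmetric:
  fixes M :: "real^'n^'n"
  assumes "transpose M = M"
  shows "finite (spectrum M)"
proof -
  have "\<forall>l\<in>spectrum M. \<exists>v. v \<noteq> 0 \<and> M *v v = l *\<^sub>R v" unfolding spectrum_def by blast
  then obtain f where f: "\<And>l. l \<in> spectrum M \<Longrightarrow> f l \<noteq> 0 \<and> M *v f l = l *\<^sub>R f l"
    by (metis bchoice)
  have orth: "f a \<bullet> f b = 0" if "a \<in> spectrum M" "b \<in> spectrum M" "a \<noteq> b" for a b
    using eigenvectors_orthogonal_symmetric[OF assms] f that by blast
  have "inj_on f (spectrum M)"
  proof (rule inj_onI, rule ccontr)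
    fix a b assume "a \<in> spectrum M" "b \<in> spectrum M" "f a = f b" "a \<noteq> b"
    then show False using orth[of a b] f[of a] by simp
  qed
  have "pairwise orthogonal (f ` spectrum M)"
    by (auto simp: pairwise_def orthogonal_def intro!: orth)
  moreover have "0 \<notin> f ` spectrum M" using f by auto
  ultimately have "finite (f ` spectrum M)"
    using pairwise_orthogonal_independent finiteI_independent by blast
  then show ?thesis using finite_imageD \<open>inj_on f (spectrum M)\<close> by blast
qed

lemma rayleigh_maximizer_eigenvector:
  fixes M :: "real^'n^'n"
  assumes sym: "transpose M = M"
    and le: "\<And>v. v \<bullet> (M *v v) \<le> l * (v \<bullet> v)"
    and eq: "u \<bullet> (M *v u) = l * (u \<bullet> u)"
  shows "M *v u = l *\<^sub>R u"
proof -
  define w where "w = l *\<^sub>R u - M *v u"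
  have Mu: "M *v u = l *\<^sub>R u - w" unfolding w_def by simp
  have "0 \<le> 2 * s * (w \<bullet> w) + s\<^sup>2 * (l * (w \<bullet> w) - w \<bullet> (M *v w))" for s
  proof -
    have "u \<bullet> (M *v w) = w \<bullet> (M *v u)"
      using inner_matrix_vector_symmetric[OF sym, of w u] by (simp add: inner_commute)
    then have "(u + s *\<^sub>R w) \<bullet> (M *v (u + s *\<^sub>R w))
        = u \<bullet> (M *v u) + 2 * s * (w \<bullet> (M *v u)) + s\<^sup>2 * (w \<bullet> (M *v w))"
      by (simp add: matrix_vector_right_distrib matrix_vector_mult_scaleR inner_add_left
          inner_add_right power2_eq_square algebra_simps)
    also have "w \<bullet> (M *v u) = l * (u \<bullet> w) - w \<bullet> w"
      by (simp add: Mu inner_diff_right inner_commute)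
    finally have "(u + s *\<^sub>R w) \<bullet> (M *v (u + s *\<^sub>R w))
        = l * (u \<bullet> u) + 2 * s * (l * (u \<bullet> w) - w \<bullet> w) + s\<^sup>2 * (w \<bullet> (M *v w))"
      by (simp add: eq)
    moreover have "(u + s *\<^sub>R w) \<bullet> (u + s *\<^sub>R w) = u \<bullet> u + 2 * s * (u \<bullet> w) + s\<^sup>2 * (w \<bullet> w)"
      by (simp add: inner_add_left inner_add_right inner_commute power2_eq_square algebra_simps)
    ultimately show ?thesis
      using le[of "u + s *\<^sub>R w"] by (simp add: algebra_simps)
  qed
  then have "w \<bullet> w = 0" by (rule quadratic_nonneg_imp_linear_coeff_eq_0)
  then show ?thesis by (simp add: Mu)
qed

lemma symmetric_max_rayleigh_eigenvalue:
  fixes M :: "real^'n^'n"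
  assumes "transpose M = M"
  obtains l where "l \<in> spectrum M" "\<And>v. v \<bullet> (M *v v) \<le> l * (v \<bullet> v)"
proof -
  let ?f = "\<lambda>v::real^'n. v \<bullet> (M *v v)"
  have "continuous_on (sphere 0 1) ?f"
    by (intro continuous_on_inner continuous_on_id linear_continuous_on_compose[where g="(*v) M"]
        matrix_vector_mul_linear)
  moreover have "sphere (0::real^'n) 1 \<noteq> {}" by (simp add: sphere_eq_empty)
  ultimately obtain u where u: "u \<in> sphere 0 1" "\<And>y. y \<in> sphere 0 1 \<Longrightarrow> ?f y \<le> ?f u"
    using continuous_attains_sup[OF compact_sphere] by blast
  have bound: "?f v \<le> ?f u * (v \<bullet> v)" for v
  proof (cases "v = 0")
    case False
    have "?f ((1 / norm v) *\<^sub>R v) \<le> ?f u" using False by (intro u(2)) simp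
    moreover have "?f ((1 / norm v) *\<^sub>R v) = ?f v / (v \<bullet> v)"
      by (simp add: matrix_vector_mult_scaleR power2_eq_square flip: power2_norm_eq_inner)
    ultimately have "?f v / (v \<bullet> v) \<le> ?f u" by simp
    moreover have "0 < v \<bullet> v" using False by simp
    ultimately show ?thesis by (simp add: pos_divide_le_eq)
  qed simp
  have "u \<bullet> u = 1" using u(1) by (simp add: dot_square_norm)
  then have "M *v u = ?f u *\<^sub>R u"
    using rayleigh_maximizer_eigenvector[OF assms bound] by simp
  moreover have "u \<noteq> 0" using u(1) by auto
  ultimately have "?f u \<in> spectrum M" unfolding spectrum_def by blast
  from this bound show thesis by (rule that)
qed

lemma quadratic_form_le_Max_spectrum:
  fixes M :: "real^'n^'n"
  assumes "transpose M = M"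
  shows "v \<bullet> (M *v v) \<le> Max (spectrum M) * (v \<bullet> v)"
proof -
  obtain l where l: "l \<in> spectrum M" "\<And>v. v \<bullet> (M *v v) \<le> l * (v \<bullet> v)"
    using symmetric_max_rayleigh_eigenvalue[OF assms] by blast
  have "l \<le> Max (spectrum M)" using l(1) finite_spectrum_symmetric[OF assms] by simp
  then have "l * (v \<bullet> v) \<le> Max (spectrum M) * (v \<bullet> v)" by (rule mult_right_mono) simp
  then show ?thesis using l(2)[of v] by linarith
qed

lemma uminus_matrix_vector_mult: "(- M) *v v = - (M *v (v::real^'n))"
  by (simp add: vec_eq_iff matrix_vector_mult_def sum_negf)

lemma spectrum_uminus: "spectrum (- M) = uminus ` spectrum M"
proof -
  have "(- M) *v v = l *\<^sub>R v \<longleftrightarrow> M *v v = (- l) *\<^sub>R v" for l v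
    unfolding uminus_matrix_vector_mult scaleR_minus_left by (metis equation_minus_iff)
  then have "l \<in> spectrum (- M) \<longleftrightarrow> - l \<in> spectrum M" for l
    unfolding spectrum_def by simp
  then show ?thesis by (force intro: image_eqI[where x = "- _"])
qed

lemma Min_spectrum_symmetric:
  fixes M :: "real^'n^'n"
  assumes "transpose M = M"
  shows "Min (spectrum M) \<in> spectrum M" "Min (spectrum M) * (v \<bullet> v) \<le> v \<bullet> (M *v v)"
proof -
  have "transpose (- M) = - M" using assms by (simp add: transpose_def vec_eq_iff)
  then obtain l where l: "l \<in> spectrum (- M)" "\<And>v. v \<bullet> ((- M) *v v) \<le> l * (v \<bullet> v)"
    using symmetric_max_rayleigh_eigenvalue by blast
  have fin: "finite (spectrum M)" using finite_spectrum_symmetric[OF assms] .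
  have "- l \<in> spectrum M" using l(1) by (auto simp: spectrum_uminus)
  then show "Min (spectrum M) \<in> spectrum M" using fin by (intro Min_in) auto
  have "Min (spectrum M) \<le> - l" using \<open>- l \<in> spectrum M\<close> fin by simp
  then have "Min (spectrum M) * (v \<bullet> v) \<le> - l * (v \<bullet> v)" by (rule mult_right_mono) simp
  then show "Min (spectrum M) * (v \<bullet> v) \<le> v \<bullet> (M *v v)"
    using l(2)[of v] by (simp add: uminus_matrix_vector_mult)
qed

lemma ones_inner_ones: "(ones :: real^'n) \<bullet> ones = real CARD('n)"
  by (simp add: inner_vec_def ones_def)

lemma quadratic_form_le_Max_spectrum_kernel_ones:
  fixes M :: "real^'n^'n"
  assumes "transpose M = M" "M *v ones = 0"
  shows "v \<bullet> (M *v v) \<le> Max (spectrum M) * (v \<bullet> v - (ones \<bullet> v)\<^sup>2 / CARD('n))"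
proof -
  define s where "s = ones \<bullet> v"
  define z where "z = v - (s / CARD('n)) *\<^sub>R ones"
  have "M *v z = M *v v"
    using assms(2) by (simp add: z_def matrix_vector_mult_diff_distrib matrix_vector_mult_scaleR)
  moreover have "ones \<bullet> (M *v v) = 0"
    using inner_matrix_vector_symmetric[OF assms(1), of ones v] assms(2) by simp
  ultimately have "z \<bullet> (M *v z) = v \<bullet> (M *v v)" by (simp add: z_def inner_diff_left)
  moreover have "z \<bullet> z = v \<bullet> v - 2 * (s / CARD('n)) * s + (s / CARD('n))\<^sup>2 * CARD('n)"
    by (simp add: z_def s_def inner_diff_left inner_diff_right inner_commute ones_inner_ones
        power2_eq_square algebra_simps)
  then have "z \<bullet> z = v \<bullet> v - s\<^sup>2 / CARD('n)"
    by (simp add: power2_eq_square field_simps)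
  ultimately show ?thesis using quadratic_form_le_Max_spectrum[OF assms(1), of z] by (simp add: s_def)
qed

lemma orth_proj_in_orthogonal:
  fixes S :: "(real^'n) set"
  assumes "subspace S"
  shows "orth_proj S v \<in> S" "w \<in> S \<Longrightarrow> (v - orth_proj S v) \<bullet> w = 0"
proof -
  obtain y z where yz: "y \<in> span S" "\<And>w. w \<in> span S \<Longrightarrow> orthogonal z w" "v = y + z"
    using orthogonal_subspace_decomp_exists by metis
  have "span S = S" using assms by (simp add: span_eq_iff)
  then have y: "y \<in> S \<and> (\<forall>w\<in>S. (v - y) \<bullet> w = 0)"
    using yz unfolding \<open>span S = S\<close> by (auto simp: orthogonal_def)
  have "p = y" if p: "p \<in> S \<and> (\<forall>w\<in>S. (v - p) \<bullet> w = 0)" for p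
  proof -
    have "p - y \<in> S" using p y assms by (simp add: subspace_diff)
    then have "(v - p) \<bullet> (p - y) = 0" "(v - y) \<bullet> (p - y) = 0" using p y by auto
    then have "(p - y) \<bullet> (p - y) = 0" by (simp add: inner_diff_left)
    then show ?thesis by simp
  qed
  then have "orth_proj S v = y"
    unfolding orth_proj_def using y by (intro the_equality) blast+
  then show "orth_proj S v \<in> S" "w \<in> S \<Longrightarrow> (v - orth_proj S v) \<bullet> w = 0" using y by auto
qed

lemma inner_orth_proj_self:
  assumes "subspace S"
  shows "v \<bullet> orth_proj S v = orth_proj S v \<bullet> orth_proj S v"
proof -
  have "(v - orth_proj S v) \<bullet> orth_proj S v = 0"
    using orth_proj_in_orthogonal[OF assms] by blast
  then show ?thesis by (simp add: inner_diff_left)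
qed

lemma subspace_eigenspace: "subspace (eigenspace M l)"
  unfolding subspace_def eigenspace_def
  by (simp add: matrix_vector_right_distrib matrix_vector_mult_scaleR scaleR_add_right)

lemma matrix_vector_mult_orth_proj_eigenspace:
  "M *v orth_proj (eigenspace M l) v = l *\<^sub>R orth_proj (eigenspace M l) v"
  using orth_proj_in_orthogonal(1)[OF subspace_eigenspace] unfolding eigenspace_def by blast

lemma spec_weight_eq_inner_self:
  "spec_weight M l = orth_proj (eigenspace M l) ones \<bullet> orth_proj (eigenspace M l) ones"
  unfolding spec_weight_def by (rule inner_orth_proj_self[OF subspace_eigenspace])

lemma inner_sum_pairwise_orthogonal:
  fixes p :: "'a \<Rightarrow> real^'n"
  assumes "finite S" "\<And>l k. l \<in> S \<Longrightarrow> k \<in> S \<Longrightarrow> l \<noteq> k \<Longrightarrow> p l \<bullet> p k = 0"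
  shows "(\<Sum>l\<in>S. a l *\<^sub>R p l) \<bullet> (\<Sum>k\<in>S. b k *\<^sub>R p k) = (\<Sum>l\<in>S. a l * b l * (p l \<bullet> p l))"
proof -
  have "(\<Sum>l\<in>S. a l *\<^sub>R p l) \<bullet> (\<Sum>k\<in>S. b k *\<^sub>R p k) = (\<Sum>l\<in>S. \<Sum>k\<in>S. a l * b k * (p l \<bullet> p k))"
    by (subst sum.swap) (simp add: inner_sum_left inner_sum_right sum_distrib_left ac_simps)
  also have "\<dots> = (\<Sum>l\<in>S. a l * b l * (p l \<bullet> p l))"
  proof (rule sum.cong[OF refl])
    fix l assume "l \<in> S"
    then have "(\<Sum>k\<in>S. a l * b k * (p l \<bullet> p k)) = (\<Sum>k\<in>{l}. a l * b k * (p l \<bullet> p k))"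
      using assms by (intro sum.mono_neutral_right) auto
    then show "(\<Sum>k\<in>S. a l * b k * (p l \<bullet> p k)) = a l * b l * (p l \<bullet> p l)" by simp
  qed
  finally show ?thesis .
qed

lemma one_minus_eigenvalue_mult_nonneg:
  fixes M :: "real^'n^'n"
  assumes "c > 0" and dominated: "\<And>v. (ones \<bullet> v)\<^sup>2 \<le> c * (v \<bullet> v - x * (v \<bullet> (M *v v)))"
    and "l \<in> spectrum M"
  shows "0 \<le> 1 - l * x"
proof -
  obtain y where y: "y \<noteq> 0" "M *v y = l *\<^sub>R y" using assms(3) unfolding spectrum_def by blast
  have "(ones \<bullet> y)\<^sup>2 \<le> c * ((1 - l * x) * (y \<bullet> y))"
    using dominated[of y] y(2) by (simp add: algebra_simps)
  then have "0 \<le> c * ((1 - l * x) * (y \<bullet> y))" by (rule order_trans[OF zero_le_power2])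
  moreover have "0 < y \<bullet> y" using y(1) by simp
  ultimately show ?thesis using \<open>c > 0\<close> by (simp add: zero_le_mult_iff)
qed

lemma one_minus_eigenvalue_mult_pos:
  fixes M :: "real^'n^'n"
  assumes "c > 0" and dominated: "\<And>v. (ones \<bullet> v)\<^sup>2 \<le> c * (v \<bullet> v - x * (v \<bullet> (M *v v)))"
    and "spec_weight M l \<noteq> 0"
  shows "0 < 1 - l * x"
proof -
  define p where "p = orth_proj (eigenspace M l) ones"
  have "ones \<bullet> p = p \<bullet> p" "p \<bullet> p \<noteq> 0"
    using assms(3) spec_weight_eq_inner_self[of M l] unfolding p_def spec_weight_def by auto
  then have "0 < (p \<bullet> p)\<^sup>2" "(p \<bullet> p)\<^sup>2 \<le> c * ((1 - l * x) * (p \<bullet> p))"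
    using dominated[of p] matrix_vector_mult_orth_proj_eigenspace[of M l ones]
    by (auto simp: p_def algebra_simps)
  then have "0 < c * ((1 - l * x) * (p \<bullet> p))" by linarith
  then show ?thesis using \<open>c > 0\<close> inner_ge_zero[of p] by (auto simp: zero_less_mult_iff)
qed

lemma spectral_walk_sum_le:
  fixes M :: "real^'n^'n"
  assumes sym: "transpose M = M" and "c > 0"
    and dominated: "\<And>v. (ones \<bullet> v)\<^sup>2 \<le> c * (v \<bullet> v - x * (v \<bullet> (M *v v)))"
  shows "(\<Sum>l\<in>{l \<in> spectrum M. spec_weight M l \<noteq> 0}. spec_weight M l / (1 - l * x)) \<le> c"
proof -
  define S where "S = {l \<in> spectrum M. spec_weight M l \<noteq> 0}"
  define p where "p l = orth_proj (eigenspace M l) ones" for l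
  define a where "a l = 1 / (1 - l * x)" for l
  define W where "W = (\<Sum>l\<in>S. a l * (p l \<bullet> p l))"
  have "finite S" unfolding S_def using finite_spectrum_symmetric[OF sym] by simp
  have Mp: "M *v p l = l *\<^sub>R p l" for l
    unfolding p_def by (rule matrix_vector_mult_orth_proj_eigenspace)
  have orth: "p l \<bullet> p k = 0" if "l \<noteq> k" for l k
    using eigenvectors_orthogonal_symmetric[OF sym Mp Mp that] .
  have a_inv: "a l * (1 - l * x) = 1" if "l \<in> S" for l
    using one_minus_eigenvalue_mult_pos[OF \<open>c > 0\<close> dominated, of l] that
    unfolding a_def S_def by simp
  \<comment> \<open>\<open>v = (I - x M)\<inverse> \<one>\<close>, for which \<open>\<langle>\<one>, v\<rangle>\<close> and \<open>\<langle>v, (I - x M) v\<rangle>\<close> both equal \<open>W\<close>\<close>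
  define v where "v = (\<Sum>l\<in>S. a l *\<^sub>R p l)"
  have "ones \<bullet> v = W"
    using spec_weight_eq_inner_self[of M] unfolding v_def W_def p_def spec_weight_def
    by (simp add: inner_sum_right)
  moreover have "v \<bullet> v - x * (v \<bullet> (M *v v)) = W"
  proof -
    have "M *v v = (\<Sum>l\<in>S. (a l * l) *\<^sub>R p l)"
      unfolding v_def by (simp add: vec.sum matrix_vector_mult_scaleR Mp)
    then have "v \<bullet> v - x * (v \<bullet> (M *v v))
        = (\<Sum>l\<in>S. a l * (p l \<bullet> p l) * (a l * (1 - l * x)))"
      unfolding v_def using \<open>finite S\<close> orth
      by (simp add: inner_sum_pairwise_orthogonal sum_distrib_left sum_subtractf[symmetric]
          algebra_simps)
    also have "\<dots> = W" unfolding W_def using a_inv by simp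
    finally show ?thesis .
  qed
  ultimately have "W\<^sup>2 \<le> c * W" using dominated[of v] by simp
  then have "W \<le> c" using \<open>c > 0\<close> by (cases "W > 0") (auto simp: power2_eq_square)
  moreover have "spec_weight M l / (1 - l * x) = a l * (p l \<bullet> p l)" for l
    unfolding a_def p_def by (simp add: spec_weight_eq_inner_self)
  ultimately show ?thesis unfolding W_def S_def by simp
qed

lemma walk_gen_le_if_dominated:
  assumes "transpose (adj_matrix E) = adj_matrix E" "c > 0"
    and dominated: "\<And>v. (ones \<bullet> v)\<^sup>2 \<le> c * (v \<bullet> v - x * (v \<bullet> (adj_matrix E *v v)))"
  shows "walk_gen E x \<le> ereal c"
  using spectral_walk_sum_le[OF assms] one_minus_eigenvalue_mult_pos[OF assms(2) dominated]
  unfolding walk_gen_def Let_def by fastforce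

lemma transpose_adj_matrix: "simple_graph E \<Longrightarrow> transpose (adj_matrix E) = adj_matrix E"
  unfolding simple_graph_def adj_matrix_def transpose_def by (auto simp: vec_eq_iff)

lemma transpose_laplacian: "simple_graph E \<Longrightarrow> transpose (laplacian E) = laplacian E"
  unfolding simple_graph_def laplacian_def degree_matrix_def adj_matrix_def transpose_def
  by (auto simp: vec_eq_iff)

lemma degree_matrix_mult_nth: "(degree_matrix E *v v) $ i = real (degree E i) * v $ i"
proof -
  have "(degree_matrix E *v v) $ i = (\<Sum>j\<in>UNIV. (if i = j then real (degree E i) else 0) * v $ j)"
    by (simp add: matrix_vector_mult_def degree_matrix_def)
  also have "\<dots> = (\<Sum>j\<in>UNIV. if i = j then real (degree E i) * v $ j else 0)"
    by (intro sum.cong) auto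
  finally show ?thesis by simp
qed

lemma laplacian_mult_ones: "laplacian E *v ones = 0"
proof -
  have "(adj_matrix E *v ones) $ i = real (degree E i)" for i
    by (simp add: matrix_vector_mult_def adj_matrix_def ones_def sum.If_cases degree_def)
  then show ?thesis
    by (simp add: laplacian_def matrix_vector_mult_diff_rdistrib vec_eq_iff degree_matrix_mult_nth
        ones_def)
qed

lemma min_degree_le_degree: "min_degree E \<le> degree E i"
  unfolding min_degree_def by (rule Min_le) auto

lemma quadratic_form_degree_matrix_ge:
  "real (min_degree E) * (v \<bullet> v) \<le> v \<bullet> (degree_matrix E *v v)"
proof -
  have "real (min_degree E) * (v $ i * v $ i) \<le> real (degree E i) * (v $ i * v $ i)" for i
    using min_degree_le_degree[of E i] by (intro mult_right_mono) simp_all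
  then have "(\<Sum>i\<in>UNIV. real (min_degree E) * (v $ i * v $ i))
      \<le> (\<Sum>i\<in>UNIV. real (degree E i) * (v $ i * v $ i))"
    by (rule sum_mono)
  then show ?thesis
    by (simp add: inner_vec_def sum_distrib_left degree_matrix_mult_nth ac_simps)
qed

lemma quadratic_form_axis_diff:
  fixes M :: "real^'n^'n"
  shows "(axis i 1 - axis j 1) \<bullet> (M *v (axis i 1 - axis j 1)) = M$i$i - M$i$j - M$j$i + M$j$j"
proof -
  have "(M *v axis l 1) $ k = M$k$l" for k l
    by (simp add: matrix_vector_mult_def axis_def mult.commute if_distrib cong: if_cong)
  then have "axis k 1 \<bullet> (M *v axis l 1) = M$k$l" for k l
    by (simp add: inner_axis')
  then show ?thesis
    by (simp add: matrix_vector_mult_diff_distrib inner_diff_left inner_diff_right)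
qed

lemma inner_axis_diff_self: "i \<noteq> j \<Longrightarrow> (axis i (1::real) - axis j 1) \<bullet> (axis i 1 - axis j 1) = 2"
  by (simp add: inner_diff_left inner_diff_right inner_axis_axis)

lemma Min_spectrum_adj_matrix_le:
  assumes "simple_graph E" "E i j"
  shows "Min (spectrum (adj_matrix E)) \<le> -1"
proof -
  have "i \<noteq> j" "E j i" "\<not> E i i" "\<not> E j j" using assms unfolding simple_graph_def by auto
  then have "Min (spectrum (adj_matrix E)) * 2 \<le> -2"
    using Min_spectrum_symmetric(2)[OF transpose_adj_matrix[OF assms(1)], of "axis i 1 - axis j 1"]
    by (simp add: quadratic_form_axis_diff inner_axis_diff_self adj_matrix_def assms(2))
  then show ?thesis by simp
qed

lemma Max_spectrum_laplacian_ge: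
  assumes "simple_graph E" "E i j"
  shows "real (min_degree E) + 1 \<le> Max (spectrum (laplacian E))"
proof -
  have "i \<noteq> j" "E j i" "\<not> E i i" "\<not> E j j" using assms unfolding simple_graph_def by auto
  then have "real (degree E i) + real (degree E j) + 2 \<le> Max (spectrum (laplacian E)) * 2"
    using quadratic_form_le_Max_spectrum[OF transpose_laplacian[OF assms(1)], of "axis i 1 - axis j 1"]
    by (simp add: quadratic_form_axis_diff inner_axis_diff_self laplacian_def degree_matrix_def
        adj_matrix_def assms(2))
  then show ?thesis using min_degree_le_degree[of E i] min_degree_le_degree[of E j] by linarith
qed

lemma adj_matrix_quadratic_form_ge:
  fixes E :: "'n::finite \<Rightarrow> 'n \<Rightarrow> bool"
  assumes "simple_graph E"
  defines "\<delta> \<equiv> real (min_degree E)" and "\<mu> \<equiv> Max (spectrum (laplacian E))"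
  shows "\<mu> * (ones \<bullet> v)\<^sup>2 / CARD('n) \<le> (\<mu> - \<delta>) * (v \<bullet> v) + v \<bullet> (adj_matrix E *v v)"
proof -
  have "v \<bullet> (laplacian E *v v) = v \<bullet> (degree_matrix E *v v) - v \<bullet> (adj_matrix E *v v)"
    by (simp add: laplacian_def matrix_vector_mult_diff_rdistrib inner_diff_right)
  then show ?thesis
    using quadratic_form_le_Max_spectrum_kernel_ones[OF transpose_laplacian[OF assms(1)]
        laplacian_mult_ones, of v] quadratic_form_degree_matrix_ge[of E v]
    unfolding \<delta>_def \<mu>_def by (simp add: algebra_simps; linarith)
qed

lemma adj_matrix_dominated:
  fixes E :: "'n::finite \<Rightarrow> 'n \<Rightarrow> bool"
  assumes "simple_graph E"
  defines "\<delta> \<equiv> real (min_degree E)" and "\<mu> \<equiv> Max (spectrum (laplacian E))"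
  assumes "\<delta> < \<mu>"
  shows "(ones \<bullet> v)\<^sup>2
    \<le> real CARD('n) * (1 - \<delta> / \<mu>) * (v \<bullet> v - 1 / (\<delta> - \<mu>) * (v \<bullet> (adj_matrix E *v v)))"
proof -
  have "\<mu> > 0" using \<open>\<delta> < \<mu>\<close> unfolding \<delta>_def by linarith
  have "(ones \<bullet> v)\<^sup>2 = CARD('n) / \<mu> * (\<mu> * (ones \<bullet> v)\<^sup>2 / CARD('n))"
    using \<open>\<mu> > 0\<close> zero_less_card_finite[where 'a='n] by simp
  also have "\<dots> \<le> CARD('n) / \<mu> * ((\<mu> - \<delta>) * (v \<bullet> v) + v \<bullet> (adj_matrix E *v v))"
    using adj_matrix_quadratic_form_ge[OF assms(1), of v] \<open>\<mu> > 0\<close> unfolding \<delta>_def \<mu>_def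
    by (intro mult_left_mono) auto
  also have "\<dots>
      = real CARD('n) * (1 - \<delta> / \<mu>) * (v \<bullet> v - 1 / (\<delta> - \<mu>) * (v \<bullet> (adj_matrix E *v v)))"
    using \<open>\<mu> > 0\<close> \<open>\<delta> < \<mu>\<close> by (simp add: field_simps)
  finally show ?thesis .
qed

theorem proposition1:
  fixes E :: "'n::finite \<Rightarrow> 'n \<Rightarrow> bool"
  assumes "simple_graph E"
    and "\<exists>i j. E i j"
  shows "\<exists>x \<in> {1 / Min (spectrum (adj_matrix E)) .. 0}.
           walk_gen E x \<le> ereal (real CARD('n) *
              (1 - real (min_degree E) / Max (spectrum (laplacian E))))"
proof -
  let ?\<delta> = "real (min_degree E)" and ?\<mu> = "Max (spectrum (laplacian E))"
    and ?lmin = "Min (spectrum (adj_matrix E))"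
  define x where "x = 1 / (?\<delta> - ?\<mu>)"
  define c where "c = real CARD('n) * (1 - ?\<delta> / ?\<mu>)"
  obtain i j where "E i j" using assms(2) by blast
  have "?\<delta> + 1 \<le> ?\<mu>" "?lmin \<le> -1"
    using Max_spectrum_laplacian_ge Min_spectrum_adj_matrix_le assms(1) \<open>E i j\<close> by blast+
  then have "c > 0" "x < 0" unfolding c_def x_def by (auto simp: field_simps)
  have dominated: "(ones \<bullet> v)\<^sup>2 \<le> c * (v \<bullet> v - x * (v \<bullet> (adj_matrix E *v v)))" for v
    unfolding c_def x_def using adj_matrix_dominated[OF assms(1)] \<open>?\<delta> + 1 \<le> ?\<mu>\<close> by simp
  have "0 \<le> 1 - ?lmin * x"
    using one_minus_eigenvalue_mult_nonneg[OF \<open>c > 0\<close> dominated]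
      Min_spectrum_symmetric(1)[OF transpose_adj_matrix[OF assms(1)]] by blast
  then have "x \<in> {1 / ?lmin .. 0}" using \<open>?lmin \<le> -1\<close> \<open>x < 0\<close> by (simp add: divide_le_eq mult.commute)
  moreover have "walk_gen E x \<le> ereal c"
    using walk_gen_le_if_dominated[OF transpose_adj_matrix[OF assms(1)] \<open>c > 0\<close> dominated] .
  ultimately show ?thesis unfolding c_def by blast
qed

end
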